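(* Consider the stochastic epidemic model described in the context under the linear control policy $u(k)=K\,I(k)$, $k\ge 0$, with a constant gain $K$. Suppose $$\delta_{\max}<\frac{v_{\min}(1-d_{\max})}{v_{\max}}\qquad\text{and}\qquad \frac{\delta_{\max}}{v_{\min}}<K<\frac{1-d_{\max}}{v_{\max}}.$$ Then: (i) $\lim_{k\to\infty} I(k)/I_0=0$ with probability one; (ii) $I(k)<I_0$ for all $k\ge 1$ with probability one. Moreover, if $K=\delta_{\max}/v_{\min}$, then $I(k)\le I_0$ for all $k$ with probability one.
   Context: Time is indexed by days $k=0,1,2,\dots$. Let $(\delta(k))_{k\ge0}$, $(d_I(k))_{k\ge0}$, $(v(k))_{k\ge0}$ be three mutually independent sequences of random variables, each sequence i.i.d. in $k$, with $0\le \delta(k)\le \delta_{\max}$, $0\le d_I(k)\le d_{\max}$ where $d_{\max}<1$, and $0<v_{\min}\le v(k)\le v_{\max}\le 1$; moreover $\delta_{\max}$ lies in the support of $\delta(k)$, $d_{\max}$ in the support of $d_I(k)$, and $v_{\min},v_{\max}$ in the support of $v(k)$. Given a control sequence $u(k)\ge 0$, the susceptible, infected, recovered and deceased cases evolve by $S(k+1)=S(k)-\delta(k)I(k)$, $I(k+1)=(1+\delta(k))I(k)-v(k)u(k)-d_I(k)I(k)$, $R(k+1)=R(k)+v(k)u(k)$, $D(k+1)=D(k)+d_I(k)I(k)$, with initial values $S(0)=S_0$, $I(0)=I_0>0$, $R(0)=D(0)=0$, where $I_0\delta_{\max}<S_0$. *)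

theory Defs
  imports "HOL-Probability.Probability"
begin

text \<open>Closed-loop epidemic model under the linear control u(k) = K * I(k).
  State = (S, I, R, D), driven by the sample path of delta, d_I, v.\<close>
fun epi :: "real \<Rightarrow> (nat \<Rightarrow> 'a \<Rightarrow> real) \<Rightarrow> (nat \<Rightarrow> 'a \<Rightarrow> real) \<Rightarrow> (nat \<Rightarrow> 'a \<Rightarrow> real)
             \<Rightarrow> real \<Rightarrow> real \<Rightarrow> nat \<Rightarrow> 'a \<Rightarrow> real \<times> real \<times> real \<times> real" where
  "epi K dl dI v S0 I0 0 \<omega> = (S0, I0, 0, 0)"
| "epi K dl dI v S0 I0 (Suc k) \<omega> =
     (case epi K dl dI v S0 I0 k \<omega> of (S, I, R, D) \<Rightarrow>
        (let u = K * I in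
          (S - dl k \<omega> * I,
           (1 + dl k \<omega>) * I - v k \<omega> * u - dI k \<omega> * I,
           R + v k \<omega> * u,
           D + dI k \<omega> * I)))"

definition infected :: "real \<Rightarrow> (nat \<Rightarrow> 'a \<Rightarrow> real) \<Rightarrow> (nat \<Rightarrow> 'a \<Rightarrow> real) \<Rightarrow> (nat \<Rightarrow> 'a \<Rightarrow> real)
             \<Rightarrow> real \<Rightarrow> real \<Rightarrow> nat \<Rightarrow> 'a \<Rightarrow> real" where
  "infected K dl dI v S0 I0 k \<omega> = fst (snd (epi K dl dI v S0 I0 k \<omega>))"

text \<open>The three sequences combined into one family, for stating mutual independence.\<close>
definition noise :: "(nat \<Rightarrow> 'a \<Rightarrow> real) \<Rightarrow> (nat \<Rightarrow> 'a \<Rightarrow> real) \<Rightarrow> (nat \<Rightarrow> 'a \<Rightarrow> real)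
             \<Rightarrow> nat + nat + nat \<Rightarrow> 'a \<Rightarrow> real" where
  "noise dl dI v i = (case i of Inl k \<Rightarrow> dl k | Inr (Inl k) \<Rightarrow> dI k | Inr (Inr k) \<Rightarrow> v k)"

definition in_support :: "'a measure \<Rightarrow> ('a \<Rightarrow> real) \<Rightarrow> real \<Rightarrow> bool" where
  "in_support M X x \<longleftrightarrow> (\<forall>e>0. measure M {\<omega> \<in> space M. \<bar>X \<omega> - x\<bar> < e} > 0)"

end

theory Submission
  imports Defs
begin

(* Under the linear control the infected count obeys I(k+1) = g(k) I(k) with the random gain
   g(k) = 1 + delta(k) - v(k) K - d_I(k).  The bounds on the noise confine every sample path of g
   to [1 - d_max - v_max K, 1 + delta_max - v_min K]; the conditions on K make this interval a
   subset of [0, 1) (of [0, 1] when K = delta_max / v_min), so I(k) <= c^k I_0 with c < 1 (c = 1). *)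

definition closed_loop_gain ::
    "real \<Rightarrow> (nat \<Rightarrow> 'a \<Rightarrow> real) \<Rightarrow> (nat \<Rightarrow> 'a \<Rightarrow> real) \<Rightarrow> (nat \<Rightarrow> 'a \<Rightarrow> real) \<Rightarrow> nat \<Rightarrow> 'a \<Rightarrow> real"
  where "closed_loop_gain K dl dI v k \<omega> = 1 + dl k \<omega> - v k \<omega> * K - dI k \<omega>"

lemma infected_eq_prod:
  "infected K dl dI v S0 I0 k \<omega> = I0 * (\<Prod>j<k. closed_loop_gain K dl dI v j \<omega>)"
proof (induction k)
  case 0
  show ?case by (simp add: infected_def)
next
  case (Suc k)
  have "infected K dl dI v S0 I0 (Suc k) \<omega> =
      closed_loop_gain K dl dI v k \<omega> * infected K dl dI v S0 I0 k \<omega>"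
    unfolding infected_def closed_loop_gain_def
    by (cases "epi K dl dI v S0 I0 k \<omega>") (simp add: Let_def algebra_simps)
  with Suc show ?case by simp
qed

lemma infected_geometric_bound:
  assumes gain: "\<And>k. 0 \<le> closed_loop_gain K dl dI v k \<omega> \<and> closed_loop_gain K dl dI v k \<omega> \<le> c"
    and "0 \<le> I0"
  shows "0 \<le> infected K dl dI v S0 I0 k \<omega> \<and> infected K dl dI v S0 I0 k \<omega> \<le> c ^ k * I0"
proof -
  have "(\<Prod>j<k. closed_loop_gain K dl dI v j \<omega>) \<le> (\<Prod>j<k. c)"
    using gain by (intro prod_mono) auto
  then show ?thesis
    using gain \<open>0 \<le> I0\<close> by (simp add: infected_eq_prod prod_nonneg mult_left_mono mult.commute)
qed

lemma infected_tendsto_zero: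
  assumes gain: "\<And>k. 0 \<le> closed_loop_gain K dl dI v k \<omega> \<and> closed_loop_gain K dl dI v k \<omega> \<le> c"
    and "c < 1" and "0 < I0"
  shows "(\<lambda>k. infected K dl dI v S0 I0 k \<omega> / I0) \<longlonglongrightarrow> 0"
proof (rule tendsto_sandwich[of "\<lambda>_. 0" _ _ "\<lambda>k. c ^ k"])
  have "0 \<le> c" using gain[of 0] by linarith
  then show "(\<lambda>k. c ^ k) \<longlonglongrightarrow> 0" using \<open>c < 1\<close> by (intro LIMSEQ_power_zero) auto
  show "\<forall>\<^sub>F k in sequentially. 0 \<le> infected K dl dI v S0 I0 k \<omega> / I0"
    "\<forall>\<^sub>F k in sequentially. infected K dl dI v S0 I0 k \<omega> / I0 \<le> c ^ k"
    using infected_geometric_bound[OF gain] \<open>0 < I0\<close> by (auto simp: divide_le_eq)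
qed simp

lemma infected_less_initial:
  assumes gain: "\<And>k. 0 \<le> closed_loop_gain K dl dI v k \<omega> \<and> closed_loop_gain K dl dI v k \<omega> \<le> c"
    and "c < 1" and "0 < I0" and "1 \<le> k"
  shows "infected K dl dI v S0 I0 k \<omega> < I0"
proof -
  have "0 \<le> c" using gain[of 0] by linarith
  then have "c ^ k * I0 < I0"
    using \<open>c < 1\<close> \<open>0 < I0\<close> \<open>1 \<le> k\<close> by (simp add: power_less_one_iff)
  then show ?thesis
    using infected_geometric_bound[OF gain] \<open>0 < I0\<close> by (meson le_less_trans less_imp_le)
qed

lemma closed_loop_gain_bounds:
  assumes "0 \<le> dl k \<omega>" "dl k \<omega> \<le> dmax_delta" "0 \<le> dI k \<omega>" "dI k \<omega> \<le> d_max"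
    and "v_min \<le> v k \<omega>" "v k \<omega> \<le> v_max" and "0 \<le> K"
  shows "1 - d_max - v_max * K \<le> closed_loop_gain K dl dI v k \<omega>"
    and "closed_loop_gain K dl dI v k \<omega> \<le> 1 + dmax_delta - v_min * K"
proof -
  have "v_min * K \<le> v k \<omega> * K" "v k \<omega> * K \<le> v_max * K"
    using assms by (auto intro: mult_right_mono)
  then show "1 - d_max - v_max * K \<le> closed_loop_gain K dl dI v k \<omega>"
    and "closed_loop_gain K dl dI v k \<omega> \<le> 1 + dmax_delta - v_min * K"
    using assms unfolding closed_loop_gain_def by linarith+
qed

lemma AE_closed_loop_gain_bounds:
  assumes bnd_dl: "\<And>k. AE \<omega> in M. 0 \<le> dl k \<omega> \<and> dl k \<omega> \<le> dmax_delta"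
    and bnd_dI: "\<And>k. AE \<omega> in M. 0 \<le> dI k \<omega> \<and> dI k \<omega> \<le> d_max"
    and bnd_v: "\<And>k. AE \<omega> in M. v_min \<le> v k \<omega> \<and> v k \<omega> \<le> v_max"
    and "0 < v_min" and "dmax_delta \<le> v_min * K" and "K * v_max \<le> 1 - d_max"
  shows "AE \<omega> in M. \<forall>k. 0 \<le> closed_loop_gain K dl dI v k \<omega>
                         \<and> closed_loop_gain K dl dI v k \<omega> \<le> 1 + dmax_delta - v_min * K"
proof -
  have "AE \<omega> in M. \<forall>k. (0 \<le> dl k \<omega> \<and> dl k \<omega> \<le> dmax_delta) \<and> (0 \<le> dI k \<omega> \<and> dI k \<omega> \<le> d_max)
                      \<and> (v_min \<le> v k \<omega> \<and> v k \<omega> \<le> v_max)"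
    using assms by (simp add: AE_all_countable AE_conj_iff)
  then show ?thesis
  proof eventually_elim
    case (elim \<omega>)
    have "0 \<le> v_min * K"
      using elim[rule_format, of 0] \<open>dmax_delta \<le> v_min * K\<close> by linarith
    then have "0 \<le> K" using \<open>0 < v_min\<close> by (simp add: zero_le_mult_iff)
    show ?case
    proof (intro allI conjI)
      fix k
      have "1 - d_max - v_max * K \<le> closed_loop_gain K dl dI v k \<omega>"
        by (rule closed_loop_gain_bounds(1)) (use elim \<open>0 \<le> K\<close> in auto)
      then show "0 \<le> closed_loop_gain K dl dI v k \<omega>"
        using \<open>K * v_max \<le> 1 - d_max\<close> by (simp add: mult.commute)
      show "closed_loop_gain K dl dI v k \<omega> \<le> 1 + dmax_delta - v_min * K"
        by (rule closed_loop_gain_bounds(2)) (use elim \<open>0 \<le> K\<close> in auto)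
    qed
  qed
qed

theorem theorem1:
  fixes M :: "'a measure"
    and dl dI v :: "nat \<Rightarrow> 'a \<Rightarrow> real"
    and dmax_delta d_max v_min v_max S0 I0 K :: real
  assumes P: "prob_space M"
    and meas: "\<And>i. noise dl dI v i \<in> borel_measurable M"
    and indep: "prob_space.indep_vars M (\<lambda>_. borel) (noise dl dI v) UNIV"
    and iid_dl: "\<And>k. distr M borel (dl k) = distr M borel (dl 0)"
    and iid_dI: "\<And>k. distr M borel (dI k) = distr M borel (dI 0)"
    and iid_v: "\<And>k. distr M borel (v k) = distr M borel (v 0)"
    and bnd_dl: "\<And>k. AE \<omega> in M. 0 \<le> dl k \<omega> \<and> dl k \<omega> \<le> dmax_delta"
    and bnd_dI: "\<And>k. AE \<omega> in M. 0 \<le> dI k \<omega> \<and> dI k \<omega> \<le> d_max"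
    and bnd_v: "\<And>k. AE \<omega> in M. v_min \<le> v k \<omega> \<and> v k \<omega> \<le> v_max"
    and dmax_lt1: "d_max < 1"
    and vmin_pos: "0 < v_min" and vmin_le: "v_min \<le> v_max" and vmax_le: "v_max \<le> 1"
    and supp_dl: "\<And>k. in_support M (dl k) dmax_delta"
    and supp_dI: "\<And>k. in_support M (dI k) d_max"
    and supp_vmin: "\<And>k. in_support M (v k) v_min"
    and supp_vmax: "\<And>k. in_support M (v k) v_max"
    and I0_pos: "I0 > 0"
    and S0_bnd: "I0 * dmax_delta < S0"
    and cond: "dmax_delta < v_min * (1 - d_max) / v_max"
  shows "(dmax_delta / v_min < K \<and> K < (1 - d_max) / v_max \<longrightarrow>
            (AE \<omega> in M. (\<lambda>k. infected K dl dI v S0 I0 k \<omega> / I0) \<longlonglongrightarrow> 0)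
          \<and> (AE \<omega> in M. \<forall>k\<ge>1. infected K dl dI v S0 I0 k \<omega> < I0))
       \<and> (K = dmax_delta / v_min \<longrightarrow>
            (AE \<omega> in M. \<forall>k. infected K dl dI v S0 I0 k \<omega> \<le> I0))"
proof -
  have vmax_pos: "0 < v_max" using vmin_pos vmin_le by linarith
  note gain_bounds = AE_closed_loop_gain_bounds[where dl = dl and dI = dI and v = v and K = K,
      OF bnd_dl bnd_dI bnd_v vmin_pos]
  show ?thesis
  proof (intro conjI impI)
    let ?c = "1 + dmax_delta - v_min * K"
    assume "dmax_delta / v_min < K \<and> K < (1 - d_max) / v_max"
    then have "dmax_delta < v_min * K" and "K * v_max < 1 - d_max"
      using vmin_pos vmax_pos by (simp_all add: field_simps)
    then have gain: "AE \<omega> in M. \<forall>k. 0 \<le> closed_loop_gain K dl dI v k \<omega>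
                                   \<and> closed_loop_gain K dl dI v k \<omega> \<le> ?c" and "?c < 1"
      using gain_bounds by simp_all
    show "AE \<omega> in M. (\<lambda>k. infected K dl dI v S0 I0 k \<omega> / I0) \<longlonglongrightarrow> 0"
      using gain by eventually_elim (blast intro: infected_tendsto_zero \<open>?c < 1\<close> I0_pos)
    show "AE \<omega> in M. \<forall>k\<ge>1. infected K dl dI v S0 I0 k \<omega> < I0"
      using gain by eventually_elim (blast intro: infected_less_initial \<open>?c < 1\<close> I0_pos)
  next
    assume K: "K = dmax_delta / v_min"
    then have vK: "v_min * K = dmax_delta" using vmin_pos by simp
    have "K * v_max * v_min = dmax_delta * v_max" using vK by (simp add: algebra_simps)
    also have "\<dots> < (1 - d_max) * v_min" using cond vmax_pos by (simp add: field_simps)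
    finally have "K * v_max \<le> 1 - d_max" using vmin_pos by simp
    with vK have "AE \<omega> in M. \<forall>k. 0 \<le> closed_loop_gain K dl dI v k \<omega>
                                  \<and> closed_loop_gain K dl dI v k \<omega> \<le> 1"
      using gain_bounds by simp
    then show "AE \<omega> in M. \<forall>k. infected K dl dI v S0 I0 k \<omega> \<le> I0"
      by eventually_elim (use infected_geometric_bound I0_pos in fastforce)
  qed
qed

end
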